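(* Let $K$ be a field and let $p(s)=s^n+a_{n-1}s^{n-1}+\dots+a_0\in K[s]$ be a monic irreducible polynomial of degree $n$. Let $b(s)=(1,s,\dots,s^{n-1})^T\in K^n[s]$, let $C=C(p)$ be the companion matrix of $p$ and let $M=M(p)$ be the Hankel matrix defined in the context. Then \[ (sI-C)^{-1}=\pi_-\bigl(p^{-1}\,b\,b^TM\bigr), \] and for every integer $k\ge1$, \[ \bigl(sI-J(p^k)\bigr)^{-1}=\pi_-\Bigl(\bigl(pI_k-N_k\bigr)^{-1}\otimes b\,b^TM\Bigr). \]
   Context: For $f\in K(s)$ (rational functions over $K$) write uniquely $f=w+y$ with $w$ strictly proper (i.e. $w=0$ or $w=g/h$, $\deg g<\deg h$) and $y\in K[s]$; $\pi_-f=w$, applied entrywise to matrices. The companion matrix $C=C(p)$ is the $n\times n$ matrix with ones in positions $(i,i+1)$, $i=1,\dots,n-1$, last row $(-a_0,-a_1,\dots,-a_{n-1})$, and zeros elsewhere. $M=M(p)$ is the $n\times n$ matrix whose $(i,j)$ entry is $a_{i+j-1}$ if $i+j-1\le n-1$, $1$ if $i+j-1=n$, and $0$ if $i+j-1>n$ (first row $(a_1,\dots,a_{n-1},1)$, last row $(1,0,\dots,0)$). $N_k$ is the $k\times k$ matrix with ones on the superdiagonal and zeros elsewhere, and $I_k$ the $k\times k$ identity. $V=e_ne_1^T$ is the $n\times n$ matrix with a single $1$ in position $(n,1)$. The Jacobson block is $J(p^k)=I_k\otimes C+N_k\otimes V$ (an $nk\times nk$ matrix with $C$ in the diagonal blocks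 and $V$ in the blocks just above the diagonal), where $\otimes$ denotes the Kronecker product $A\otimes B=(a_{ij}B)$. *)

theory Defs
  imports "HOL-Computational_Algebra.Polynomial" "HOL-Computational_Algebra.Fraction_Field"
    "Jordan_Normal_Form.Gauss_Jordan_Elimination"
begin

text \<open>Rational functions K(s) are modelled as the fraction field of K[s].\<close>

definition const_rf :: "'a::field \<Rightarrow> 'a poly fract" where
  "const_rf c = Fract [:c:] 1"

definition poly_rf :: "'a::field poly \<Rightarrow> 'a poly fract" where
  "poly_rf q = Fract q 1"

definition s_rf :: "'a::field poly fract" where
  "s_rf = Fract [:0, 1:] 1"

definition strictly_proper :: "'a::field poly fract \<Rightarrow> bool" where
  "strictly_proper w \<longleftrightarrow> w = 0 \<or> (\<exists>g h. h \<noteq> 0 \<and> degree g < degree h \<and> w = Fract g h)"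

definition pi_minus :: "'a::field poly fract \<Rightarrow> 'a poly fract" where
  "pi_minus f = (THE w. strictly_proper w \<and> (\<exists>y. f = w + poly_rf y))"

definition pi_minus_mat :: "'a::field poly fract mat \<Rightarrow> 'a poly fract mat" where
  "pi_minus_mat A = map_mat pi_minus A"

definition lift_mat :: "'a::field mat \<Rightarrow> 'a poly fract mat" where
  "lift_mat A = map_mat const_rf A"

definition kron :: "'a::times mat \<Rightarrow> 'a mat \<Rightarrow> 'a mat" where
  "kron A B = mat (dim_row A * dim_row B) (dim_col A * dim_col B)
     (\<lambda>(i,j). A $$ (i div dim_row B, j div dim_col B) * B $$ (i mod dim_row B, j mod dim_col B))"

definition companion :: "'a::field poly \<Rightarrow> 'a mat" where
  "companion p = (let n = degree p in mat n n (\<lambda>(i,j).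
      if i = n - 1 then - coeff p j else if j = i + 1 then 1 else 0))"

text \<open>Hankel matrix M(p); 1-indexed entry (i,j) is a_{i+j-1} if i+j-1 \<le> n-1,
  1 if i+j-1 = n, 0 otherwise. Here with 0-indexed i,j, so i+j-1 becomes i+j+1.\<close>
definition hankel :: "'a::field poly \<Rightarrow> 'a mat" where
  "hankel p = (let n = degree p in mat n n (\<lambda>(i,j).
      if i + j + 1 \<le> n - 1 then coeff p (i + j + 1) else if i + j + 1 = n then 1 else 0))"

definition shift_mat :: "nat \<Rightarrow> 'a::zero_neq_one mat" where
  "shift_mat k = mat k k (\<lambda>(i,j). if j = i + 1 then 1 else 0)"

definition V_mat :: "nat \<Rightarrow> 'a::zero_neq_one mat" where
  "V_mat n = mat n n (\<lambda>(i,j). if i = n - 1 \<and> j = 0 then 1 else 0)"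

definition jacobson :: "'a::field poly \<Rightarrow> nat \<Rightarrow> 'a mat" where
  "jacobson p k = kron (1\<^sub>m k) (companion p) + kron (shift_mat k) (V_mat (degree p))"

definition bvec :: "nat \<Rightarrow> 'a::field poly fract mat" where
  "bvec n = mat n 1 (\<lambda>(i,j). poly_rf (monom 1 i))"

end

theory Submission
  imports Defs "Jordan_Normal_Form.Determinant"
begin

text \<open>
  Let J be a constant matrix and Q a matrix over K(s) such that (sI - J) Q is polynomial and
  s pi_minus(Q) - I is strictly proper. Then R = pi_minus(Q) satisfies: (sI - J) R is polynomial,
  because Q - R is, and (sI - J) R - I = (s R - I) - J R is strictly proper; so (sI - J) R = I.

  For the companion matrix C one has (sI - C) b = p e_n, hence (sI - C) p^-1 b b^T M = e_n b^T M
  is polynomial. The (i,j) entry of b b^T M is s^i q_j with p = s^(j+1) q_j + r_j, and reducing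
  s^i q_j modulo p shows that s pi_minus(s^i q_j / p) - delta_ij has numerator of degree < n.

  For the Jacobson block, sI - J(p^k) = I_k \<otimes> (sI - C) - N_k \<otimes> V and V b = e_n, so by the
  mixed product rule (sI - J(p^k)) ((pI_k - N_k)^-1 \<otimes> b b^T M) = I_k \<otimes> e_n b^T M. The entries
  of (pI_k - N_k)^-1 are 0 or p^-m with m \<ge> 1; for m \<ge> 2 the entry s^i q_j / p^m has degree
  at most -2, so it is its own strictly proper part and s times it is still strictly proper.
\<close>

section \<open>Polynomial and strictly proper rational functions\<close>

lemma poly_rf_add: "poly_rf (a + b) = poly_rf a + poly_rf b"
  and poly_rf_diff: "poly_rf (a - b) = poly_rf a - poly_rf b"
  and poly_rf_mult: "poly_rf (a * b) = poly_rf a * poly_rf b"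
  and poly_rf_0: "poly_rf 0 = 0"
  and poly_rf_1: "poly_rf 1 = 1"
  by (simp_all add: poly_rf_def Zero_fract_def One_fract_def)

lemma poly_rf_sum: "poly_rf (sum f A) = (\<Sum>x\<in>A. poly_rf (f x))"
  by (induction A rule: infinite_finite_induct) (auto simp: poly_rf_0 poly_rf_add)

lemma poly_rf_eq_0_iff: "poly_rf q = 0 \<longleftrightarrow> q = 0"
  by (simp add: poly_rf_def Zero_fract_def eq_fract)

lemma const_rf_eq_poly_rf: "const_rf c = poly_rf [:c:]"
  by (simp add: const_rf_def poly_rf_def)

lemma s_rf_eq_poly_rf: "s_rf = poly_rf [:0, 1:]"
  by (simp add: s_rf_def poly_rf_def)

lemma const_rf_add: "const_rf (a + b) = const_rf a + const_rf b"
  and const_rf_0: "const_rf 0 = 0"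
  by (simp_all add: const_rf_eq_poly_rf poly_rf_add [symmetric] poly_rf_0 [symmetric])

definition is_poly_rf :: "'a::field poly fract \<Rightarrow> bool" where
  "is_poly_rf f \<longleftrightarrow> (\<exists>q. f = poly_rf q)"

lemma is_poly_rf_poly_rf [simp]: "is_poly_rf (poly_rf q)"
  by (auto simp: is_poly_rf_def)

lemma is_poly_rf_0 [simp]: "is_poly_rf 0"
  by (metis is_poly_rf_poly_rf poly_rf_0)

lemma is_poly_rf_1 [simp]: "is_poly_rf 1"
  by (metis is_poly_rf_poly_rf poly_rf_1)

lemma is_poly_rf_const_rf [simp]: "is_poly_rf (const_rf c)"
  by (simp add: const_rf_eq_poly_rf)

lemma is_poly_rf_s_rf [simp]: "is_poly_rf s_rf"
  by (simp add: s_rf_eq_poly_rf)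

lemma is_poly_rf_add: "is_poly_rf a \<Longrightarrow> is_poly_rf b \<Longrightarrow> is_poly_rf (a + b)"
  by (metis is_poly_rf_def poly_rf_add)

lemma is_poly_rf_diff: "is_poly_rf a \<Longrightarrow> is_poly_rf b \<Longrightarrow> is_poly_rf (a - b)"
  by (metis is_poly_rf_def poly_rf_diff)

lemma is_poly_rf_uminus: "is_poly_rf a \<Longrightarrow> is_poly_rf (- a)"
  by (metis diff_0 is_poly_rf_0 is_poly_rf_diff)

lemma is_poly_rf_mult: "is_poly_rf a \<Longrightarrow> is_poly_rf b \<Longrightarrow> is_poly_rf (a * b)"
  by (metis is_poly_rf_def poly_rf_mult)

lemma is_poly_rf_sum: "(\<And>x. x \<in> A \<Longrightarrow> is_poly_rf (f x)) \<Longrightarrow> is_poly_rf (sum f A)"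
  by (induction A rule: infinite_finite_induct) (auto intro: is_poly_rf_add)

lemma strictly_proper_Fract: "h \<noteq> 0 \<Longrightarrow> degree g < degree h \<Longrightarrow> strictly_proper (Fract g h)"
  unfolding strictly_proper_def by blast

lemma strictly_proper_0 [simp]: "strictly_proper 0"
  unfolding strictly_proper_def by simp

lemma strictly_properE:
  assumes "strictly_proper w"
  obtains g h where "h \<noteq> 0" "degree g < degree h" "w = Fract g h"
proof (cases "w = 0")
  case True
  then have "w = Fract 0 [:0, 1:]" by (simp add: Zero_fract_def eq_fract)
  then show ?thesis by (intro that[of "[:0, 1:]" 0]) simp_all
next
  case False
  with assms that show ?thesis unfolding strictly_proper_def by blast
qed

lemma strictly_proper_add:
  assumes "strictly_proper a" "strictly_proper b"
  shows "strictly_proper (a + b)"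
proof -
  obtain g1 h1 where 1: "h1 \<noteq> 0" "degree g1 < degree h1" "a = Fract g1 h1"
    using assms(1) by (rule strictly_properE)
  obtain g2 h2 where 2: "h2 \<noteq> 0" "degree g2 < degree h2" "b = Fract g2 h2"
    using assms(2) by (rule strictly_properE)
  have "degree (g1 * h2 + g2 * h1) \<le> max (degree (g1 * h2)) (degree (g2 * h1))"
    by (rule degree_add_le_max)
  moreover have "degree (g1 * h2) \<le> degree g1 + degree h2" "degree (g2 * h1) \<le> degree g2 + degree h1"
    by (rule degree_mult_le)+
  moreover have "degree (h1 * h2) = degree h1 + degree h2"
    using 1 2 by (simp add: degree_mult_eq)
  ultimately have "degree (g1 * h2 + g2 * h1) < degree (h1 * h2)"
    using 1 2 by linarith
  then show ?thesis
    using 1 2 by (simp add: strictly_proper_Fract)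
qed

lemma strictly_proper_uminus: "strictly_proper a \<Longrightarrow> strictly_proper (- a)"
  by (erule strictly_properE) (simp add: strictly_proper_Fract)

lemma strictly_proper_diff:
  "strictly_proper a \<Longrightarrow> strictly_proper b \<Longrightarrow> strictly_proper (a - b)"
  by (metis diff_conv_add_uminus strictly_proper_add strictly_proper_uminus)

lemma strictly_proper_const_rf_mult:
  assumes "strictly_proper a"
  shows "strictly_proper (const_rf c * a)"
  using assms
proof (rule strictly_properE)
  fix g h :: "'a poly"
  assume "h \<noteq> 0" "degree g < degree h" "a = Fract g h"
  moreover have "degree ([:c:] * g) \<le> degree g"
    by (metis degree_mult_le degree_pCons_0 add_0)
  ultimately show ?thesis
    by (simp add: const_rf_def strictly_proper_Fract)
qed

lemma strictly_proper_sum: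
  "(\<And>x. x \<in> A \<Longrightarrow> strictly_proper (f x)) \<Longrightarrow> strictly_proper (sum f A)"
  by (induction A rule: infinite_finite_induct) (auto intro: strictly_proper_add)

lemma strictly_proper_poly_rf_eq_0:
  assumes "strictly_proper w" "is_poly_rf w"
  shows "w = 0"
proof -
  obtain q where q: "w = poly_rf q"
    using assms(2) by (auto simp: is_poly_rf_def)
  obtain g h where gh: "h \<noteq> 0" "degree g < degree h" "w = Fract g h"
    using assms(1) by (rule strictly_properE)
  then have "g = q * h"
    using q by (simp add: poly_rf_def eq_fract)
  then have "q = 0"
    using gh by (metis add_less_same_cancel2 degree_mult_eq not_less_zero)
  then show ?thesis
    using q by (simp add: poly_rf_0)
qed

lemma pi_minus_eqI:
  assumes "strictly_proper w" "f = w + poly_rf q"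
  shows "pi_minus f = w"
  unfolding pi_minus_def
proof (rule the_equality)
  show "strictly_proper w \<and> (\<exists>q. f = w + poly_rf q)"
    using assms by blast
  fix w' assume "strictly_proper w' \<and> (\<exists>q. f = w' + poly_rf q)"
  then obtain q' where w': "strictly_proper w'" "f = w' + poly_rf q'"
    by blast
  have "w' - w = poly_rf (q - q')"
    using assms w' by (simp add: poly_rf_diff algebra_simps)
  then have "is_poly_rf (w' - w)" by simp
  then have "w' - w = 0"
    using assms w' by (intro strictly_proper_poly_rf_eq_0 strictly_proper_diff)
  then show "w' = w" by simp
qed

lemma pi_minus_strictly_proper: "strictly_proper w \<Longrightarrow> pi_minus w = w"
  by (rule pi_minus_eqI[where q = 0]) (simp_all add: poly_rf_0)

lemma Fract_eq_mod_plus_div: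
  assumes "h \<noteq> 0"
  shows "Fract g h = Fract (g mod h) h + poly_rf (g div h)"
proof -
  have "g = g mod h + h * (g div h)" by simp
  then show ?thesis
    using assms by (simp add: poly_rf_def)
qed

lemma strictly_proper_Fract_mod:
  assumes "h \<noteq> 0"
  shows "strictly_proper (Fract (g mod h) h)"
proof (cases "degree h = 0")
  case True
  then have "g mod h = 0"
    using assms by (simp add: is_unit_iff_degree unit_imp_mod_eq_0)
  then show ?thesis by (simp add: Zero_fract_def[symmetric] fract_collapse)
next
  case False
  then show ?thesis
    using assms degree_mod_less[of h g] by (intro strictly_proper_Fract) auto
qed

lemma pi_minus_Fract: "h \<noteq> 0 \<Longrightarrow> pi_minus (Fract g h) = Fract (g mod h) h"
  by (rule pi_minus_eqI[OF strictly_proper_Fract_mod Fract_eq_mod_plus_div])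

lemma strictly_proper_pi_minus: "strictly_proper (pi_minus f)"
  and is_poly_rf_diff_pi_minus: "is_poly_rf (f - pi_minus f)"
proof -
  obtain g h where f: "f = Fract g h" "h \<noteq> 0" by (cases f) auto
  have pi: "pi_minus f = Fract (g mod h) h"
    using f(2) unfolding f(1) by (rule pi_minus_Fract)
  then show "strictly_proper (pi_minus f)"
    using strictly_proper_Fract_mod[OF f(2)] by (simp only:)
  have "f - pi_minus f = poly_rf (g div h)"
    unfolding pi unfolding f(1) Fract_eq_mod_plus_div[OF f(2), of g] by simp
  then show "is_poly_rf (f - pi_minus f)" by simp
qed

section \<open>Inverting sI - J through the strictly proper part\<close>

definition poly_mat :: "'a::field poly fract mat \<Rightarrow> bool" where
  "poly_mat A \<longleftrightarrow> (\<forall>i<dim_row A. \<forall>j<dim_col A. is_poly_rf (A $$ (i,j)))"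

lemma poly_mat_mult:
  "poly_mat A \<Longrightarrow> poly_mat B \<Longrightarrow> dim_col A = dim_row B \<Longrightarrow> poly_mat (A * B)"
  unfolding poly_mat_def by (auto simp: scalar_prod_def intro!: is_poly_rf_sum is_poly_rf_mult)

lemma poly_mat_diff:
  "A \<in> carrier_mat n m \<Longrightarrow> B \<in> carrier_mat n m \<Longrightarrow> poly_mat A \<Longrightarrow> poly_mat B \<Longrightarrow>
    poly_mat (A - B)"
  unfolding poly_mat_def by (auto intro: is_poly_rf_diff)

lemma poly_mat_lift_mat: "poly_mat (lift_mat A)"
  by (simp add: poly_mat_def lift_mat_def)

lemma poly_mat_diff_pi_minus_mat: "poly_mat (Q - pi_minus_mat Q)"
  by (simp add: poly_mat_def pi_minus_mat_def is_poly_rf_diff_pi_minus)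

lemma mat_inverse_eqI:
  fixes A R :: "'a::field mat"
  assumes A: "A \<in> carrier_mat n n" and R: "R \<in> carrier_mat n n" and AR: "A * R = 1\<^sub>m n"
  shows "mat_inverse A = Some R"
proof -
  have "det A * det R = 1"
    using arg_cong[OF AR, of det] det_mult[OF A R] by simp
  then have "A \<in> Units (ring_mat TYPE('a) n undefined)"
    by (intro det_non_zero_imp_unit[OF A]) auto
  then obtain B where B: "mat_inverse A = Some B"
    using mat_inverse(1)[OF A] by fastforce
  with mat_inverse(2)[OF A] have BA: "B * A = 1\<^sub>m n" and Bc: "B \<in> carrier_mat n n"
    by auto
  have "B = B * (A * R)" using Bc AR by simp
  also have "\<dots> = R" using Bc A R BA by (simp add: assoc_mult_mat[symmetric])
  finally show ?thesis using B by simp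
qed

lemma smult_one_minus_mult:
  fixes A B :: "'a::comm_ring_1 mat"
  assumes A: "A \<in> carrier_mat n n" and B: "B \<in> carrier_mat n m"
  shows "(c \<cdot>\<^sub>m 1\<^sub>m n - A) * B = c \<cdot>\<^sub>m B - A * B"
  using minus_mult_distrib_mat[OF smult_carrier_mat[OF one_carrier_mat] A B]
  by (simp add: mult_smult_assoc_mat[OF one_carrier_mat B] left_mult_one_mat[OF B])

lemma mat_inverse_resolvent_eq_pi_minus_mat:
  fixes n :: nat and J :: "'a::field mat" and Q :: "'a poly fract mat"
  defines "A \<equiv> s_rf \<cdot>\<^sub>m 1\<^sub>m n - lift_mat J"
  assumes J: "J \<in> carrier_mat n n" and Q: "Q \<in> carrier_mat n n"
    and poly: "poly_mat (A * Q)"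
    and proper: "\<And>i j. i < n \<Longrightarrow> j < n \<Longrightarrow>
      strictly_proper (s_rf * pi_minus (Q $$ (i,j)) - (if i = j then 1 else 0))"
  shows "mat_inverse A = Some (pi_minus_mat Q)"
proof -
  define R where "R = pi_minus_mat Q"
  have Ac: "A \<in> carrier_mat n n" and Lc: "lift_mat J \<in> carrier_mat n n"
    using J by (auto simp: A_def lift_mat_def)
  have Rc: "R \<in> carrier_mat n n" and QRc: "Q - R \<in> carrier_mat n n"
    using Q by (auto simp: R_def pi_minus_mat_def)
  have "R = Q - (Q - R)"
    using Q Rc by (intro eq_matI) auto
  then have "A * R = A * Q - A * (Q - R)"
    using mult_minus_distrib_mat[OF Ac Q QRc] by simp
  moreover have "poly_mat A"
    using J by (auto simp: poly_mat_def A_def lift_mat_def intro: is_poly_rf_diff is_poly_rf_uminus)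
  then have "poly_mat (A * (Q - R))"
    using Ac QRc poly_mat_diff_pi_minus_mat by (intro poly_mat_mult) (auto simp: R_def)
  ultimately have poly_AR: "poly_mat (A * R)"
    using Ac Q QRc poly by (metis mult_carrier_mat poly_mat_diff)
  have AR: "A * R = s_rf \<cdot>\<^sub>m R - lift_mat J * R"
    unfolding A_def by (rule smult_one_minus_mult[OF Lc Rc])
  have "(A * R) $$ (i,j) = 1\<^sub>m n $$ (i,j)" if ij: "i < n" "j < n" for i j
  proof -
    have diff: "(A * R) $$ (i,j) - (if i = j then 1 else 0)
        = (s_rf * R $$ (i,j) - (if i = j then 1 else 0)) - (lift_mat J * R) $$ (i,j)"
      using ij Rc Lc by (simp add: AR)
    have "strictly_proper (s_rf * R $$ (i,j) - (if i = j then 1 else 0))"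
      using proper[OF ij] ij Q by (simp add: R_def pi_minus_mat_def)
    moreover have "strictly_proper ((lift_mat J * R) $$ (i,j))"
      using ij Rc J
      by (auto simp: lift_mat_def scalar_prod_def R_def pi_minus_mat_def
          intro!: strictly_proper_sum strictly_proper_const_rf_mult strictly_proper_pi_minus)
    ultimately have "strictly_proper ((A * R) $$ (i,j) - (if i = j then 1 else 0))"
      unfolding diff by (rule strictly_proper_diff)
    moreover have "is_poly_rf ((A * R) $$ (i,j) - (if i = j then 1 else 0))"
      using poly_AR ij Ac Rc by (auto simp: poly_mat_def intro!: is_poly_rf_diff)
    ultimately show ?thesis
      using ij strictly_proper_poly_rf_eq_0 by fastforce
  qed
  then show ?thesis
    unfolding R_def[symmetric] using Ac Rc by (intro mat_inverse_eqI eq_matI) auto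
qed

section \<open>The companion matrix\<close>

lemma poly_monom_shift_cutoff:
  fixes p :: "'a::comm_semiring_1 poly"
  shows "p = monom 1 k * poly_shift k p + poly_cutoff k p"
  by (rule poly_eqI) (auto simp: coeff_monom_mult coeff_poly_shift coeff_poly_cutoff)

lemma degree_poly_shift_le: "degree (poly_shift k p) \<le> degree p - k"
  by (rule degree_le) (simp add: coeff_poly_shift coeff_eq_0)

lemma degree_poly_cutoff_less:
  assumes "k > 0"
  shows "degree (poly_cutoff k p) < k"
proof -
  have "degree (poly_cutoff k p) \<le> k - 1"
    by (rule degree_le) (auto simp: coeff_poly_cutoff)
  with assms show ?thesis by linarith
qed

lemma degree_monom_1_mult_le: "degree (monom (1::'a::field) i * q) \<le> i + degree q"
  by (metis degree_monom_eq degree_mult_le one_neq_zero)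

lemma degree_monom_mult_poly_shift_le:
  "degree (monom (1::'a::field) i * poly_shift (Suc j) p) \<le> i + (degree p - Suc j)"
  using degree_monom_1_mult_le[of i "poly_shift (Suc j) p"] degree_poly_shift_le[of "Suc j" p]
  by linarith

text \<open>Writing p = s^(j+1) q_j + r_j with deg r_j \<le> j, the polynomial s^i q_j below is the (i,j)
  entry of b b^T M (lemma bbT_hankel_entry). For i > j it is s^(i-j-1) p - s^(i-j-1) r_j.\<close>
lemma monom_shift_mod:
  fixes p :: "'a::field poly"
  assumes "i < degree p" "j < degree p"
  shows "(monom 1 i * poly_shift (Suc j) p) mod p =
    (if i \<le> j then monom 1 i * poly_shift (Suc j) p
     else - (monom 1 (i - Suc j) * poly_cutoff (Suc j) p))"
proof (cases "i \<le> j")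
  case True
  with assms degree_monom_mult_poly_shift_le[of i j p] show ?thesis
    by (simp add: mod_poly_less)
next
  case False
  define d where "d = i - Suc j"
  have "monom 1 i * poly_shift (Suc j) p = monom 1 d * (monom 1 (Suc j) * poly_shift (Suc j) p)"
    using False by (simp add: d_def mult_monom mult.assoc[symmetric])
  also have "\<dots> = - (monom 1 d * poly_cutoff (Suc j) p) + monom 1 d * p"
    by (subst (3) poly_monom_shift_cutoff[of p "Suc j"]) (simp add: algebra_simps)
  finally have "(monom 1 i * poly_shift (Suc j) p) mod p = (- (monom 1 d * poly_cutoff (Suc j) p)) mod p"
    by (simp only: mod_mult_self1)
  moreover have "degree (- (monom 1 d * poly_cutoff (Suc j) p)) < degree p"
    using degree_monom_1_mult_le[of d "poly_cutoff (Suc j) p"] degree_poly_cutoff_less[of "Suc j" p] assms False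
    by (simp add: d_def)
  ultimately show ?thesis
    using False by (simp add: mod_poly_less d_def)
qed

lemma degree_x_mult_le: "degree ([:0, 1:] * q) \<le> Suc (degree (q :: 'a::comm_semiring_1 poly))"
  using degree_pCons_le[of 0 q] by simp

lemma s_rf_mult_Fract: "s_rf * Fract g h = Fract ([:0, 1:] * g) h"
  by (simp add: s_rf_def)

lemma strictly_proper_s_rf_pi_minus_Fract_power:
  fixes p :: "'a::field poly"
  assumes lc: "lead_coeff p = 1" and "i < degree p" "j < degree p" "m \<ge> 2"
  shows "strictly_proper (s_rf * pi_minus (Fract (monom 1 i * poly_shift (Suc j) p) (p ^ m)))"
proof -
  let ?F = "monom 1 i * poly_shift (Suc j) p"
  have p0: "p ^ m \<noteq> 0" using lc by auto
  have "degree ?F \<le> i + (degree p - Suc j)"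
    by (rule degree_monom_mult_poly_shift_le)
  moreover have "2 * degree p \<le> m * degree p"
    using assms(4) by (rule mult_le_mono1)
  moreover have "degree (p ^ m) = m * degree p"
    using lc by (intro degree_power_eq) auto
  ultimately have "degree ?F < degree (p ^ m)" "degree ([:0, 1:] * ?F) < degree (p ^ m)"
    using degree_x_mult_le[of ?F] assms(2,3) by linarith+
  then show ?thesis
    using p0 by (simp add: pi_minus_strictly_proper strictly_proper_Fract s_rf_mult_Fract)
qed

lemma strictly_proper_s_rf_pi_minus_Fract:
  fixes p :: "'a::field poly"
  assumes lc: "lead_coeff p = 1" and i: "i < degree p" and j: "j < degree p"
  shows "strictly_proper (s_rf * pi_minus (Fract (monom 1 i * poly_shift (Suc j) p) p)
    - (if i = j then 1 else 0))"
proof -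
  let ?F = "monom 1 i * poly_shift (Suc j) p"
  let ?G = "[:0, 1:] * (?F mod p) - (if i = j then p else 0)"
  have p0: "p \<noteq> 0" using lc by auto
  have "s_rf * pi_minus (Fract ?F p) - (if i = j then 1 else 0) = Fract ?G p"
    using p0 by (simp add: pi_minus_Fract s_rf_mult_Fract One_fract_def)
  moreover have "degree ?G < degree p"
  proof (cases rule: linorder_cases[of i j])
    case less
    then show ?thesis
      using j degree_monom_mult_poly_shift_le[of i j p] degree_x_mult_le[of ?F]
      by (simp add: monom_shift_mod[OF i j])
  next
    case equal
    have "?G = - poly_cutoff (Suc i) p"
      using equal i
      by (subst (3) poly_monom_shift_cutoff[of p "Suc i"])
        (simp add: monom_shift_mod monom_Suc)
    then show ?thesis
      using degree_poly_cutoff_less[of "Suc i" p] i by simp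
  next
    case greater
    let ?r = "monom 1 (i - Suc j) * poly_cutoff (Suc j) p"
    have "degree ?r \<le> i - Suc j + j"
      using degree_monom_1_mult_le[of "i - Suc j" "poly_cutoff (Suc j) p"]
        degree_poly_cutoff_less[of "Suc j" p] by linarith
    then show ?thesis
      using greater i degree_x_mult_le[of "- ?r"] by (simp add: monom_shift_mod[OF i j])
  qed
  ultimately show ?thesis
    using p0 by (simp add: strictly_proper_Fract)
qed

lemma strictly_proper_s_rf_pi_minus_Fract_power_minus_delta:
  fixes p :: "'a::field poly"
  assumes "lead_coeff p = 1" "i < degree p" "j < degree p" "m \<ge> 1"
  shows "strictly_proper (s_rf * pi_minus (Fract (monom 1 i * poly_shift (Suc j) p) (p ^ m))
    - (if m = 1 \<and> i = j then 1 else 0))"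
proof (cases "m = 1")
  case True
  then show ?thesis
    using strictly_proper_s_rf_pi_minus_Fract[OF assms(1-3)] by simp
next
  case False
  then show ?thesis
    using strictly_proper_s_rf_pi_minus_Fract_power[OF assms(1-3), of m] assms(4) by simp
qed

definition last_unit_col :: "nat \<Rightarrow> 'a::field poly fract mat" where
  "last_unit_col n = mat n 1 (\<lambda>(i,j). if i = n - 1 then 1 else 0)"

abbreviation bbT_hankel :: "'a::field poly \<Rightarrow> 'a poly fract mat" where
  "bbT_hankel p \<equiv> bvec (degree p) * transpose_mat (bvec (degree p)) * lift_mat (hankel p)"

abbreviation eT_hankel :: "'a::field poly \<Rightarrow> 'a poly fract mat" where
  "eT_hankel p \<equiv> last_unit_col (degree p) * transpose_mat (bvec (degree p)) * lift_mat (hankel p)"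

lemma companion_carrier: "companion p \<in> carrier_mat (degree p) (degree p)"
  and hankel_carrier: "hankel p \<in> carrier_mat (degree p) (degree p)"
  and V_mat_carrier: "V_mat n \<in> carrier_mat n n"
  and bvec_carrier: "bvec n \<in> carrier_mat n 1"
  and last_unit_col_carrier: "last_unit_col n \<in> carrier_mat n 1"
  by (simp_all add: companion_def hankel_def V_mat_def bvec_def last_unit_col_def Let_def)

lemma lift_mat_carrier [simp]: "lift_mat A \<in> carrier_mat n m \<longleftrightarrow> A \<in> carrier_mat n m"
  unfolding lift_mat_def carrier_mat_def by simp

lemma bbT_hankel_carrier: "bbT_hankel p \<in> carrier_mat (degree p) (degree p)"
  using bvec_carrier hankel_carrier by (metis lift_mat_carrier mult_carrier_mat transpose_carrier_mat)

lemma poly_mat_eT_hankel: "poly_mat (eT_hankel p)"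
  by (intro poly_mat_mult poly_mat_lift_mat)
    (auto simp: poly_mat_def last_unit_col_def bvec_def lift_mat_def hankel_def Let_def)

lemma const_rf_mult_poly_rf_monom: "const_rf c * poly_rf (monom 1 l) = poly_rf (monom c l)"
  by (simp add: const_rf_eq_poly_rf poly_rf_mult [symmetric] smult_monom)

lemma poly_rf_monom_mult_const_rf: "poly_rf (monom 1 l) * const_rf c = poly_rf (monom c l)"
  by (simp add: mult.commute const_rf_mult_poly_rf_monom)

lemma lift_mat_mult_bvec_entry:
  assumes "A \<in> carrier_mat m n" "i < m"
  shows "(lift_mat A * bvec n) $$ (i,0) = poly_rf (\<Sum>l<n. monom (A $$ (i,l)) l)"
  using assms
  by (simp add: lift_mat_def bvec_def scalar_prod_def poly_rf_sum const_rf_mult_poly_rf_monom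
      lessThan_atLeast0)

lemma transpose_bvec_mult_lift_mat_entry:
  assumes "A \<in> carrier_mat n m" "j < m"
  shows "(transpose_mat (bvec n) * lift_mat A) $$ (0,j) = poly_rf (\<Sum>l<n. monom (A $$ (l,j)) l)"
  using assms
  by (simp add: lift_mat_def bvec_def scalar_prod_def poly_rf_sum poly_rf_monom_mult_const_rf
      lessThan_atLeast0)

lemma companion_row_sum:
  fixes p :: "'a::field poly"
  assumes lc: "lead_coeff p = 1" and i: "i < degree p"
  shows "(\<Sum>l<degree p. monom (companion p $$ (i,l)) l)
    = monom 1 (Suc i) - (if i = degree p - 1 then p else 0)"
proof (cases "i = degree p - 1")
  case True
  then have n: "degree p = Suc i" using i by simp
  have "(\<Sum>l<degree p. monom (companion p $$ (i,l)) l) = (\<Sum>l<degree p. - monom (coeff p l) l)"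
    using True i by (intro sum.cong) (auto simp: companion_def Let_def minus_monom)
  also have "\<dots> = monom 1 (degree p) - p"
  proof -
    have "(\<Sum>l<degree p. monom (coeff p l) l) + monom 1 (degree p) = p"
      using poly_as_sum_of_monoms[of p] lc by (simp add: lessThan_Suc_atMost[symmetric])
    then show ?thesis
      by (simp add: sum_negf) (metis add_diff_cancel_right' minus_diff_eq)
  qed
  finally show ?thesis
    using n by simp
next
  case False
  then have "(\<Sum>l<degree p. monom (companion p $$ (i,l)) l)
      = (\<Sum>l<degree p. if l = Suc i then monom 1 l else 0)"
    using i by (intro sum.cong) (auto simp: companion_def Let_def)
  also have "\<dots> = monom 1 (Suc i)"
    using False i by simp
  finally show ?thesis
    using False by simp
qed

lemma hankel_column_sum:
  fixes p :: "'a::field poly"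
  assumes lc: "lead_coeff p = 1" and j: "j < degree p"
  shows "(\<Sum>l<degree p. monom (hankel p $$ (l,j)) l) = poly_shift (Suc j) p"
proof (rule poly_eqI)
  fix m
  have "hankel p $$ (l,j) = coeff p (l + Suc j)" if "l < degree p" for l
    using that j lc by (auto simp: hankel_def Let_def coeff_eq_0)
  then show "coeff (\<Sum>l<degree p. monom (hankel p $$ (l,j)) l) m = coeff (poly_shift (Suc j) p) m"
    by (auto simp: coeff_sum coeff_poly_shift coeff_eq_0)
qed

lemma resolvent_carrier: "J \<in> carrier_mat n n \<Longrightarrow> s_rf \<cdot>\<^sub>m 1\<^sub>m n - lift_mat J \<in> carrier_mat n n"
  by (simp add: minus_carrier_mat)

lemma resolvent_mult_bvec_entry:
  assumes J: "J \<in> carrier_mat n n" and i: "i < n"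
  shows "((s_rf \<cdot>\<^sub>m 1\<^sub>m n - lift_mat J) * bvec n) $$ (i,0)
    = poly_rf (monom 1 (Suc i) - (\<Sum>l<n. monom (J $$ (i,l)) l))"
proof -
  have "((s_rf \<cdot>\<^sub>m 1\<^sub>m n - lift_mat J) * bvec n) $$ (i,0)
      = s_rf * bvec n $$ (i,0) - (lift_mat J * bvec n) $$ (i,0)"
    unfolding smult_one_minus_mult[OF lift_mat_carrier[THEN iffD2, OF J] bvec_carrier]
    using J i by (simp add: bvec_def)
  then show ?thesis
    unfolding lift_mat_mult_bvec_entry[OF J i]
    using i by (simp add: bvec_def s_rf_eq_poly_rf poly_rf_mult [symmetric] poly_rf_diff monom_Suc)
qed

lemma resolvent_companion_mult_bvec:
  fixes p :: "'a::field poly"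
  assumes lc: "lead_coeff p = 1"
  shows "(s_rf \<cdot>\<^sub>m 1\<^sub>m (degree p) - lift_mat (companion p)) * bvec (degree p)
    = poly_rf p \<cdot>\<^sub>m last_unit_col (degree p)"
  using companion_carrier[of p] bvec_carrier[of "degree p"]
  by (intro eq_matI)
    (auto simp: resolvent_mult_bvec_entry companion_row_sum[OF lc] last_unit_col_def poly_rf_0)

lemma lift_V_mat_mult_bvec: "lift_mat (V_mat n) * bvec n = last_unit_col n"
proof (rule eq_matI)
  fix i j assume "i < dim_row (last_unit_col n)" "j < dim_col (last_unit_col n)"
  then have i: "i < n" and j: "j = 0" by (auto simp: last_unit_col_def)
  have "(\<Sum>l<n. monom (V_mat n $$ (i,l)) l) = (\<Sum>l<n. if i = n - 1 \<and> l = 0 then 1 else 0)"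
    using i by (intro sum.cong) (auto simp: V_mat_def)
  also have "\<dots> = (if i = n - 1 then 1 else 0)"
    using i by simp
  finally have row: "(\<Sum>l<n. monom (V_mat n $$ (i,l)) l) = (if i = n - 1 then 1 else 0)" .
  show "(lift_mat (V_mat n) * bvec n) $$ (i,j) = last_unit_col n $$ (i,j)"
    unfolding j lift_mat_mult_bvec_entry[OF V_mat_carrier i] row
    using i by (simp add: last_unit_col_def poly_rf_0 poly_rf_1)
qed (auto simp: last_unit_col_def bvec_def lift_mat_def V_mat_def)

lemma mult_bbT_hankel:
  assumes A: "A \<in> carrier_mat (degree p) (degree p)"
  shows "A * bbT_hankel p = A * bvec (degree p) * transpose_mat (bvec (degree p)) * lift_mat (hankel p)"
proof -
  have b: "bvec (degree p) \<in> carrier_mat (degree p) 1"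
    and bT: "transpose_mat (bvec (degree p)) \<in> carrier_mat 1 (degree p)"
    and L: "lift_mat (hankel p) \<in> carrier_mat (degree p) (degree p)"
    using bvec_carrier hankel_carrier by auto
  show ?thesis
    using assoc_mult_mat[OF A mult_carrier_mat[OF b bT] L] assoc_mult_mat[OF A b bT] by simp
qed

lemma bbT_hankel_entry:
  fixes p :: "'a::field poly"
  assumes lc: "lead_coeff p = 1" and i: "i < degree p" and j: "j < degree p"
  shows "bbT_hankel p $$ (i,j) = poly_rf (monom 1 i * poly_shift (Suc j) p)"
proof -
  let ?b = "bvec (degree p) :: 'a poly fract mat"
  have b: "?b \<in> carrier_mat (degree p) 1"
    and bT: "transpose_mat ?b \<in> carrier_mat 1 (degree p)"
    and L: "lift_mat (hankel p) \<in> carrier_mat (degree p) (degree p)"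
    using bvec_carrier hankel_carrier by auto
  have "(transpose_mat ?b * lift_mat (hankel p)) $$ (0,j) = poly_rf (poly_shift (Suc j) p)"
    using transpose_bvec_mult_lift_mat_entry[OF hankel_carrier j] hankel_column_sum[OF lc j] by simp
  then show ?thesis
    unfolding assoc_mult_mat[OF b bT L]
    using i j b L by (simp add: scalar_prod_def bvec_def poly_rf_mult)
qed

lemma resolvent_companion_mult_bbT_hankel:
  fixes p :: "'a::field poly"
  assumes "lead_coeff p = 1"
  shows "(s_rf \<cdot>\<^sub>m 1\<^sub>m (degree p) - lift_mat (companion p)) * bbT_hankel p = poly_rf p \<cdot>\<^sub>m eT_hankel p"
proof -
  have e: "last_unit_col (degree p) \<in> carrier_mat (degree p) 1"
    and bT: "transpose_mat (bvec (degree p)) \<in> carrier_mat 1 (degree p)"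
    and L: "lift_mat (hankel p) \<in> carrier_mat (degree p) (degree p)"
    using last_unit_col_carrier bvec_carrier hankel_carrier by auto
  show ?thesis
    unfolding mult_bbT_hankel[OF resolvent_carrier[OF companion_carrier]]
      resolvent_companion_mult_bvec[OF assms]
    by (simp add: mult_smult_assoc_mat[OF e bT] mult_smult_assoc_mat[OF mult_carrier_mat[OF e bT] L])
qed

lemma lift_V_mat_mult_bbT_hankel: "lift_mat (V_mat (degree p)) * bbT_hankel p = eT_hankel p"
  unfolding mult_bbT_hankel[OF lift_mat_carrier[THEN iffD2, OF V_mat_carrier]] lift_V_mat_mult_bvec ..

lemma mat_inverse_companion_resolvent:
  fixes p :: "'a::field poly"
  assumes lc: "lead_coeff p = 1"
  shows "mat_inverse (s_rf \<cdot>\<^sub>m 1\<^sub>m (degree p) - lift_mat (companion p))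
    = Some (pi_minus_mat (inverse (poly_rf p) \<cdot>\<^sub>m bbT_hankel p))"
proof (rule mat_inverse_resolvent_eq_pi_minus_mat[OF companion_carrier])
  let ?c = "inverse (poly_rf p)"
  have p0: "poly_rf p \<noteq> 0"
    using lc by (auto simp: poly_rf_eq_0_iff)
  show "?c \<cdot>\<^sub>m bbT_hankel p \<in> carrier_mat (degree p) (degree p)"
    by (rule smult_carrier_mat[OF bbT_hankel_carrier])
  have "(s_rf \<cdot>\<^sub>m 1\<^sub>m (degree p) - lift_mat (companion p)) * (?c \<cdot>\<^sub>m bbT_hankel p)
      = ?c \<cdot>\<^sub>m (poly_rf p \<cdot>\<^sub>m eT_hankel p)"
    by (simp add: mult_smult_distrib[OF resolvent_carrier[OF companion_carrier] bbT_hankel_carrier]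
        resolvent_companion_mult_bbT_hankel[OF lc])
  also have "\<dots> = eT_hankel p"
    using p0 by (intro eq_matI) auto
  finally show "poly_mat ((s_rf \<cdot>\<^sub>m 1\<^sub>m (degree p) - lift_mat (companion p)) * (?c \<cdot>\<^sub>m bbT_hankel p))"
    by (simp add: poly_mat_eT_hankel)
  fix i j assume ij: "i < degree p" "j < degree p"
  have "(?c \<cdot>\<^sub>m bbT_hankel p) $$ (i,j) = ?c * bbT_hankel p $$ (i,j)"
    using ij carrier_matD[OF bbT_hankel_carrier[of p]] by simp
  also have "\<dots> = Fract (monom 1 i * poly_shift (Suc j) p) p"
    unfolding bbT_hankel_entry[OF lc ij] by (simp add: poly_rf_def)
  finally have "(?c \<cdot>\<^sub>m bbT_hankel p) $$ (i,j) = Fract (monom 1 i * poly_shift (Suc j) p) p" .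
  then show "strictly_proper (s_rf * pi_minus ((?c \<cdot>\<^sub>m bbT_hankel p) $$ (i,j)) - (if i = j then 1 else 0))"
    using strictly_proper_s_rf_pi_minus_Fract[OF lc ij] by simp
qed

section \<open>Kronecker products\<close>

lemma index_kron [simp]:
  "i < dim_row A * dim_row B \<Longrightarrow> j < dim_col A * dim_col B \<Longrightarrow>
    kron A B $$ (i,j) = A $$ (i div dim_row B, j div dim_col B) * B $$ (i mod dim_row B, j mod dim_col B)"
  "dim_row (kron A B) = dim_row A * dim_row B" "dim_col (kron A B) = dim_col A * dim_col B"
  by (auto simp: kron_def)

lemma kron_carrier:
  "A \<in> carrier_mat a b \<Longrightarrow> B \<in> carrier_mat c d \<Longrightarrow> kron A B \<in> carrier_mat (a * c) (b * d)"
  unfolding carrier_mat_def by simp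

lemma div_mod_less:
  fixes i k n :: nat
  assumes "i < k * n"
  shows "i div n < k" "i mod n < n"
proof -
  have "n > 0" using assms by (auto intro: gr0I)
  then show "i div n < k" "i mod n < n"
    using assms by (auto simp: less_mult_imp_div_less mult.commute)
qed

lemma sum_lessThan_mult:
  fixes k n :: nat
  shows "(\<Sum>l<k * n. f l) = (\<Sum>c<k. \<Sum>l<n. f (c * n + l))"
proof (induction k)
  case (Suc k)
  have "(\<Sum>l<Suc k * n. f l) = (\<Sum>l<k * n. f l) + (\<Sum>l\<in>{k * n..<k * n + n}. f l)"
    unfolding lessThan_atLeast0 by (subst sum.atLeastLessThan_concat) (auto simp: add.commute)
  also have "(\<Sum>l\<in>{k * n..<k * n + n}. f l) = (\<Sum>l<n. f (k * n + l))"
    unfolding sum.atLeastLessThan_shift_0[of f "k * n"] by (simp add: lessThan_atLeast0 add.commute)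
  finally show ?case
    using Suc by simp
qed simp

lemma kron_mult:
  fixes A1 A2 B1 B2 :: "'a::comm_ring_1 mat"
  assumes A1: "A1 \<in> carrier_mat a b" and A2: "A2 \<in> carrier_mat b c"
    and B1: "B1 \<in> carrier_mat n m" and B2: "B2 \<in> carrier_mat m r"
  shows "kron A1 B1 * kron A2 B2 = kron (A1 * A2) (B1 * B2)"
proof (rule eq_matI)
  fix i j assume "i < dim_row (kron (A1 * A2) (B1 * B2))" "j < dim_col (kron (A1 * A2) (B1 * B2))"
  then have i: "i < a * n" and j: "j < c * r" using A1 A2 B1 B2 by auto
  have entry: "kron A1 B1 $$ (i, x * m + l) * kron A2 B2 $$ (x * m + l, j) =
      (A1 $$ (i div n, x) * A2 $$ (x, j div r)) * (B1 $$ (i mod n, l) * B2 $$ (l, j mod r))"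
    if "x < b" "l < m" for x l
  proof -
    have "x * m + l < Suc x * m"
      using that by simp
    also have "\<dots> \<le> b * m"
      using that by (intro mult_le_mono1) simp
    finally show ?thesis
      using i j that A1 A2 B1 B2 by (simp add: mult_ac)
  qed
  have "(kron A1 B1 * kron A2 B2) $$ (i,j) = (\<Sum>L<b * m. kron A1 B1 $$ (i,L) * kron A2 B2 $$ (L,j))"
    using i j A1 A2 B1 B2 by (simp add: scalar_prod_def lessThan_atLeast0)
  also have "\<dots> = (\<Sum>x<b. \<Sum>l<m. (A1 $$ (i div n, x) * A2 $$ (x, j div r)) *
      (B1 $$ (i mod n, l) * B2 $$ (l, j mod r)))"
    unfolding sum_lessThan_mult by (intro sum.cong refl) (simp add: entry)
  also have "\<dots> = kron (A1 * A2) (B1 * B2) $$ (i,j)"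
    using i j A1 A2 B1 B2 div_mod_less[OF i] div_mod_less[OF j]
    by (simp add: sum_product[symmetric] scalar_prod_def lessThan_atLeast0)
  finally show "(kron A1 B1 * kron A2 B2) $$ (i,j) = kron (A1 * A2) (B1 * B2) $$ (i,j)" .
qed (use A1 A2 B1 B2 in auto)

lemma kron_smult_right_eq_left:
  fixes A B :: "'a::comm_ring_1 mat"
  shows "kron A (c \<cdot>\<^sub>m B) = kron (c \<cdot>\<^sub>m A) B"
  by (rule eq_matI) (auto simp: mult_ac div_mod_less)

lemma kron_minus_left:
  fixes A B C :: "'a::comm_ring_1 mat"
  assumes "A \<in> carrier_mat k l" "B \<in> carrier_mat k l"
  shows "kron (A - B) C = kron A C - kron B C"
  using assms by (intro eq_matI) (auto simp: algebra_simps div_mod_less)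

lemma poly_mat_kron: "poly_mat A \<Longrightarrow> poly_mat B \<Longrightarrow> poly_mat (kron A B)"
  unfolding poly_mat_def by (auto intro!: is_poly_rf_mult simp: div_mod_less)

section \<open>The Jacobson block\<close>

definition shift_resolvent :: "'a::field poly \<Rightarrow> nat \<Rightarrow> 'a poly fract mat" where
  "shift_resolvent p k = mat k k (\<lambda>(a,b). if a \<le> b then Fract 1 (p ^ (b - a + 1)) else 0)"

lemma shift_resolvent_carrier: "shift_resolvent p k \<in> carrier_mat k k"
  and shift_mat_carrier: "shift_mat k \<in> carrier_mat k k"
  by (simp_all add: shift_resolvent_def shift_mat_def)

lemma shift_mat_mult_shift_resolvent_entry:
  assumes "a < k" "b < k"
  shows "(shift_mat k * shift_resolvent p k) $$ (a,b) = (if a < b then Fract 1 (p ^ (b - a)) else 0)"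
proof -
  have "(shift_mat k * shift_resolvent p k) $$ (a,b)
      = (\<Sum>c<k. if c = Suc a then shift_resolvent p k $$ (c,b) else 0)"
    using assms by (simp add: shift_mat_def shift_resolvent_def scalar_prod_def lessThan_atLeast0
        if_distrib[of "\<lambda>x. x * _"] cong: if_cong)
  also have "\<dots> = (if Suc a < k then shift_resolvent p k $$ (Suc a, b) else 0)"
    by simp
  also have "\<dots> = (if a < b then Fract 1 (p ^ (b - a)) else 0)"
    using assms by (auto simp: shift_resolvent_def Suc_diff_Suc)
  finally show ?thesis .
qed

lemma poly_shift_mat_mult_shift_resolvent:
  fixes p :: "'a::field poly"
  assumes p0: "p \<noteq> 0"
  shows "(poly_rf p \<cdot>\<^sub>m 1\<^sub>m k - shift_mat k) * shift_resolvent p k = 1\<^sub>m k"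
proof (rule eq_matI)
  fix a b assume "a < dim_row (1\<^sub>m k :: 'a poly fract mat)" "b < dim_col (1\<^sub>m k :: 'a poly fract mat)"
  then have a: "a < k" and b: "b < k" by auto
  have "poly_rf p * shift_resolvent p k $$ (a,b) = (if a \<le> b then Fract 1 (p ^ (b - a)) else 0)"
    using a b p0 by (simp add: shift_resolvent_def poly_rf_def eq_fract)
  then have "poly_rf p * shift_resolvent p k $$ (a,b) - (shift_mat k * shift_resolvent p k) $$ (a,b)
      = (if a = b then 1 else 0)"
    unfolding shift_mat_mult_shift_resolvent_entry[OF a b]
    using a b by (auto simp: shift_resolvent_def One_fract_def)
  moreover have "(poly_rf p \<cdot>\<^sub>m 1\<^sub>m k - shift_mat k) * shift_resolvent p k
      = poly_rf p \<cdot>\<^sub>m shift_resolvent p k - shift_mat k * shift_resolvent p k"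
    by (rule smult_one_minus_mult[OF shift_mat_carrier shift_resolvent_carrier])
  ultimately show "((poly_rf p \<cdot>\<^sub>m 1\<^sub>m k - shift_mat k) * shift_resolvent p k) $$ (a,b) = 1\<^sub>m k $$ (a,b)"
    using a b by (simp add: shift_mat_def shift_resolvent_def)
qed (use shift_mat_carrier shift_resolvent_carrier in auto)

lemma mat_inverse_poly_shift_mat:
  fixes p :: "'a::field poly"
  assumes "p \<noteq> 0"
  shows "mat_inverse (poly_rf p \<cdot>\<^sub>m 1\<^sub>m k - shift_mat k) = Some (shift_resolvent p k)"
  using shift_mat_carrier shift_resolvent_carrier poly_shift_mat_mult_shift_resolvent[OF assms]
  by (intro mat_inverse_eqI minus_carrier_mat) auto

lemma jacobson_carrier: "jacobson p k \<in> carrier_mat (degree p * k) (degree p * k)"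
  unfolding carrier_mat_def jacobson_def by (simp add: V_mat_def shift_mat_def mult.commute)

lemma resolvent_jacobson:
  fixes p :: "'a::field poly"
  shows "s_rf \<cdot>\<^sub>m 1\<^sub>m (degree p * k) - lift_mat (jacobson p k)
    = kron (1\<^sub>m k) (s_rf \<cdot>\<^sub>m 1\<^sub>m (degree p) - lift_mat (companion p))
      - kron (shift_mat k) (lift_mat (V_mat (degree p)))"
    (is "?L = ?R")
proof (rule eq_matI)
  let ?n = "degree p"
  have dims: "dim_row (companion p) = ?n" "dim_col (companion p) = ?n"
    "dim_row (V_mat ?n :: 'a mat) = ?n" "dim_col (V_mat ?n :: 'a mat) = ?n"
    using companion_carrier V_mat_carrier by auto
  fix I J assume "I < dim_row ?R" "J < dim_col ?R"
  then have I: "I < k * ?n" and J: "J < k * ?n"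
    by (simp_all add: dims lift_mat_def shift_mat_def)
  define a i b j where "a = I div ?n" and "i = I mod ?n" and "b = J div ?n" and "j = J mod ?n"
  have ai: "a < k" "i < ?n" "b < k" "j < ?n"
    unfolding a_def i_def b_def j_def using div_mod_less[OF I] div_mod_less[OF J] by auto
  have IJ: "I = J \<longleftrightarrow> a = b \<and> i = j"
    unfolding a_def i_def b_def j_def by (metis div_mult_mod_eq)
  have jac: "jacobson p k $$ (I,J) = (if a = b then companion p $$ (i,j) else 0)
      + (if b = Suc a then V_mat ?n $$ (i,j) else 0)"
    using I J ai by (simp add: jacobson_def dims shift_mat_def a_def i_def b_def j_def)
  show "?L $$ (I,J) = ?R $$ (I,J)"
    using I J ai jacobson_carrier[of p k]
    by (simp add: jac IJ dims lift_mat_def shift_mat_def a_def [symmetric] i_def [symmetric]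
        b_def [symmetric] j_def [symmetric] mult.commute const_rf_add const_rf_0)
qed (simp_all add: lift_mat_def shift_mat_def jacobson_def V_mat_def companion_def Let_def mult.commute)

lemma resolvent_jacobson_mult_kron:
  fixes p :: "'a::field poly"
  assumes lc: "lead_coeff p = 1"
  shows "(s_rf \<cdot>\<^sub>m 1\<^sub>m (degree p * k) - lift_mat (jacobson p k))
      * kron (shift_resolvent p k) (bbT_hankel p)
    = kron (1\<^sub>m k) (eT_hankel p)"
proof -
  let ?n = "degree p"
  let ?A = "s_rf \<cdot>\<^sub>m 1\<^sub>m ?n - lift_mat (companion p)"
  let ?V = "lift_mat (V_mat ?n) :: 'a poly fract mat"
  let ?S = "shift_mat k :: 'a poly fract mat"
  let ?N = "shift_resolvent p k"
  have A: "?A \<in> carrier_mat ?n ?n" by (rule resolvent_carrier[OF companion_carrier])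
  have V: "?V \<in> carrier_mat ?n ?n" using V_mat_carrier by simp
  have "(s_rf \<cdot>\<^sub>m 1\<^sub>m (?n * k) - lift_mat (jacobson p k)) * kron ?N (bbT_hankel p)
      = kron (1\<^sub>m k) ?A * kron ?N (bbT_hankel p) - kron ?S ?V * kron ?N (bbT_hankel p)"
    unfolding resolvent_jacobson
    by (rule minus_mult_distrib_mat kron_carrier one_carrier_mat shift_mat_carrier A V
        shift_resolvent_carrier bbT_hankel_carrier)+
  also have "kron (1\<^sub>m k) ?A * kron ?N (bbT_hankel p) = kron ?N (poly_rf p \<cdot>\<^sub>m eT_hankel p)"
    using shift_resolvent_carrier[of p k]
    by (simp add: kron_mult[OF one_carrier_mat shift_resolvent_carrier A bbT_hankel_carrier]
        resolvent_companion_mult_bbT_hankel[OF lc])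
  also have "kron ?S ?V * kron ?N (bbT_hankel p) = kron (?S * ?N) (eT_hankel p)"
    by (simp add: kron_mult[OF shift_mat_carrier shift_resolvent_carrier V bbT_hankel_carrier]
        lift_V_mat_mult_bbT_hankel)
  also have "kron ?N (poly_rf p \<cdot>\<^sub>m eT_hankel p) - kron (?S * ?N) (eT_hankel p)
      = kron (poly_rf p \<cdot>\<^sub>m ?N - ?S * ?N) (eT_hankel p)"
    unfolding kron_smult_right_eq_left
    by (rule kron_minus_left[symmetric, OF smult_carrier_mat[OF shift_resolvent_carrier]
          mult_carrier_mat[OF shift_mat_carrier shift_resolvent_carrier]])
  also have "poly_rf p \<cdot>\<^sub>m ?N - ?S * ?N = 1\<^sub>m k"
  proof -
    have "p \<noteq> 0" using lc by auto
    from poly_shift_mat_mult_shift_resolvent[OF this, of k] show ?thesis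
      by (simp add: smult_one_minus_mult[OF shift_mat_carrier shift_resolvent_carrier])
  qed
  finally show ?thesis .
qed

lemma mat_inverse_jacobson_resolvent:
  fixes p :: "'a::field poly"
  assumes lc: "lead_coeff p = 1"
  shows "mat_inverse (s_rf \<cdot>\<^sub>m 1\<^sub>m (degree p * k) - lift_mat (jacobson p k))
    = Some (pi_minus_mat (kron (shift_resolvent p k) (bbT_hankel p)))"
proof (rule mat_inverse_resolvent_eq_pi_minus_mat[OF jacobson_carrier])
  let ?n = "degree p"
  let ?Q = "kron (shift_resolvent p k) (bbT_hankel p)"
  show Q: "?Q \<in> carrier_mat (?n * k) (?n * k)"
    using kron_carrier[OF shift_resolvent_carrier bbT_hankel_carrier] by (simp add: mult.commute)
  show "poly_mat ((s_rf \<cdot>\<^sub>m 1\<^sub>m (?n * k) - lift_mat (jacobson p k)) * ?Q)"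
    unfolding resolvent_jacobson_mult_kron[OF lc]
    by (intro poly_mat_kron poly_mat_eT_hankel) (simp add: poly_mat_def)
  fix I J assume I: "I < ?n * k" and J: "J < ?n * k"
  define a i b j where "a = I div ?n" and "i = I mod ?n" and "b = J div ?n" and "j = J mod ?n"
  have ai: "a < k" "i < ?n" "b < k" "j < ?n"
    unfolding a_def i_def b_def j_def using div_mod_less I J by (auto simp: mult.commute)
  have IJ: "I = J \<longleftrightarrow> a = b \<and> i = j"
    unfolding a_def i_def b_def j_def by (metis div_mult_mod_eq)
  have dims: "dim_row (shift_resolvent p k) = k" "dim_col (shift_resolvent p k) = k"
    "dim_row (bbT_hankel p) = ?n" "dim_col (bbT_hankel p) = ?n"
    using carrier_matD[OF shift_resolvent_carrier[of p k]] carrier_matD[OF bbT_hankel_carrier[of p]]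
    by blast+
  have Q_entry: "?Q $$ (I,J) = shift_resolvent p k $$ (a,b) * bbT_hankel p $$ (i,j)"
    using index_kron(1)[of I "shift_resolvent p k" "bbT_hankel p" J] I J
    unfolding dims a_def i_def b_def j_def by (simp add: mult.commute)
  show "strictly_proper (s_rf * pi_minus (?Q $$ (I,J)) - (if I = J then 1 else 0))"
  proof (cases "a \<le> b")
    case True
    then have "?Q $$ (I,J) = Fract (monom 1 i * poly_shift (Suc j) p) (p ^ (b - a + 1))"
      unfolding Q_entry bbT_hankel_entry[OF lc ai(2,4)] using ai
      by (simp add: shift_resolvent_def poly_rf_def)
    moreover have "(I = J) = (b - a + 1 = 1 \<and> i = j)"
      using True IJ by auto
    ultimately show ?thesis
      using strictly_proper_s_rf_pi_minus_Fract_power_minus_delta[OF lc ai(2,4), of "b - a + 1"]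
      by simp
  next
    case False
    then show ?thesis
      using Q_entry ai IJ by (simp add: shift_resolvent_def pi_minus_strictly_proper)
  qed
qed

theorem lemma4p2:
  fixes p :: "'a::field poly"
  assumes "irreducible p" and "lead_coeff p = 1"
  shows "(mat_inverse (s_rf \<cdot>\<^sub>m 1\<^sub>m (degree p) - lift_mat (companion p))
           = Some (pi_minus_mat (inverse (poly_rf p) \<cdot>\<^sub>m
                 (bvec (degree p) * transpose_mat (bvec (degree p)) * lift_mat (hankel p)))))
    \<and> (\<forall>k::nat. k \<ge> 1 \<longrightarrow>
           mat_inverse (s_rf \<cdot>\<^sub>m 1\<^sub>m (degree p * k) - lift_mat (jacobson p k))
           = Some (pi_minus_mat (kron
                (the (mat_inverse (poly_rf p \<cdot>\<^sub>m 1\<^sub>m k - shift_mat k)))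
                (bvec (degree p) * transpose_mat (bvec (degree p)) * lift_mat (hankel p)))))"
proof -
  have "p \<noteq> 0"
    using assms(2) by auto
  then show ?thesis
    using mat_inverse_companion_resolvent[OF assms(2)] mat_inverse_jacobson_resolvent[OF assms(2)]
    by (simp add: mat_inverse_poly_shift_mat)
qed

end
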